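(* Suppose $(\mathcal W,\mathcal W,\mu)$ is a reduced system of the FTvN system $(\mathcal V,\mathcal W,\lambda)$. Let $C_{\mathcal V}$ and $C_{\mathcal W}$ denote the centers of $(\mathcal V,\mathcal W,\lambda)$ and $(\mathcal W,\mathcal W,\mu)$ respectively. Then: (a) $\operatorname{ran}\mu=\operatorname{ran}\lambda$ and $\mu^2=\mu$. (b) $\lambda(C_{\mathcal V})=\mu(C_{\mathcal W})=C_{\mathcal W}$. (c) $\dim C_{\mathcal V}=\dim\lambda(C_{\mathcal V})=\dim\mu(C_{\mathcal W})=\dim C_{\mathcal W}$. (d) $e$ is a unit element of $(\mathcal V,\mathcal W,\lambda)$ if and only if $\lambda(e)$ is a unit element of $(\mathcal W,\mathcal W,\mu)$.
   Context: A Fan-Theobald-von Neumann (FTvN) system is a triple $(\mathcal V,\mathcal W,\lambda)$ where $\mathcal V,\mathcal W$ are real inner product spaces and $\lambda:\mathcal V\to\mathcal W$ is a map such that: (A1) $\|\lambda(x)\|=\|x\|$ for all $x$; (A2) $\langle x,y\rangle\le\langle\lambda(x),\lambda(y)\rangle$ for all $x,y$; (A3) for every $c\in\mathcal V$ and $q\in\lambda(\mathcal V)$ there exists $x$ with $\lambda(x)=q$ and $\langle c,x\rangle=\langle\lambda(c),\lambda(x)\rangle$. In a FTvN system, $x,y$ commute if $\langle x,y\rangle=\langle\lambda(x),\lambda(y)\rangle$; the center is the set of elements commuting with every element; a unit element is a nonzero $e$ such that the center equals $\mathbb Re$. A FTvN system $(\mathcal W,\mathcal W,\mu)$ is a reduced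 system of $(\mathcal V,\mathcal W,\lambda)$ if (C1) $\mu\circ\lambda=\lambda$ and (C2) $\operatorname{ran}\mu\subseteq\operatorname{ran}\lambda$. *)

theory Defs
  imports "HOL-Analysis.Analysis"
begin

definition ftvn :: "('v::real_inner \<Rightarrow> 'w::real_inner) \<Rightarrow> bool" where
  "ftvn lam \<longleftrightarrow>
     (\<forall>x. norm (lam x) = norm x) \<and>
     (\<forall>x y. inner x y \<le> inner (lam x) (lam y)) \<and>
     (\<forall>c q. q \<in> range lam \<longrightarrow> (\<exists>x. lam x = q \<and> inner c x = inner (lam c) (lam x)))"

definition commute :: "('v::real_inner \<Rightarrow> 'w::real_inner) \<Rightarrow> 'v \<Rightarrow> 'v \<Rightarrow> bool" where
  "commute lam x y \<longleftrightarrow> inner x y = inner (lam x) (lam y)"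

definition center :: "('v::real_inner \<Rightarrow> 'w::real_inner) \<Rightarrow> 'v set" where
  "center lam = {x. \<forall>y. commute lam x y}"

definition unit_element :: "('v::real_inner \<Rightarrow> 'w::real_inner) \<Rightarrow> 'v \<Rightarrow> bool" where
  "unit_element lam e \<longleftrightarrow> e \<noteq> 0 \<and> center lam = range (\<lambda>c::real. c *\<^sub>R e)"

definition reduced_system :: "('v::real_inner \<Rightarrow> 'w::real_inner) \<Rightarrow> ('w \<Rightarrow> 'w) \<Rightarrow> bool" where
  "reduced_system lam mu \<longleftrightarrow> ftvn lam \<and> ftvn mu \<and> mu \<circ> lam = lam \<and> range mu \<subseteq> range lam"

end

theory Submission
  imports Defs
begin

(* Everything rests on the equality case of Cauchy-Schwarz: two vectors of equal norm whose inner
   product is their squared norm coincide.  As lam preserves norms, it is additive, homogeneous and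
   injective on the center, so it maps the center isomorphically onto its image; moreover x is
   central iff lam (-x) = - lam x.  In a reduced system mu fixes range lam pointwise (C1), which with
   C2 gives (a); mu then also fixes its own center, and the oddness criterion together with A3 for
   lam shows that x is central for lam iff lam x is central for mu.  Hence
   center mu = lam ` center lam, from which (b), (c) and (d) follow. *)

lemma inner_eq_norm_power2_imp_eq:
  fixes x y :: "'a::real_inner"
  assumes "norm x = norm y" and "inner x y = (norm x)\<^sup>2"
  shows "x = y"
proof -
  have "inner x x = inner y y"
    using assms(1) by (metis power2_norm_eq_inner)
  then have "inner (x - y) (x - y) = 0"
    using assms by (simp add: inner_diff_left inner_diff_right inner_commute power2_norm_eq_inner)
  then show ?thesis by simp
qed

lemma dim_image_eq_on_subspace:
  assumes S: "subspace S"
    and add: "\<And>x y. x \<in> S \<Longrightarrow> y \<in> S \<Longrightarrow> f (x + y) = f x + f y"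
    and scale: "\<And>c x. x \<in> S \<Longrightarrow> f (c *\<^sub>R x) = c *\<^sub>R f x"
    and inj: "inj_on f S"
  shows "dim (f ` S) = dim S"
proof -
  obtain B where B: "B \<subseteq> S" "independent B" "S \<subseteq> span B"
    by (rule basis_exists)
  have span_B: "span B = S"
    by (rule span_subspace[OF B(1) B(3) S])
  obtain g where g: "linear g" "\<And>x. x \<in> B \<Longrightarrow> g x = f x"
    using linear_independent_extend[OF B(2)] by blast
  have "f 0 = 0"
    using scale[of 0 0] subspace_0[OF S] by simp
  have agree: "x \<in> S \<and> g x = f x" if "x \<in> S" for x
  proof (rule span_induct[where P = "\<lambda>x. x \<in> S \<and> g x = f x"])
    show "x \<in> span B" using that B(3) by blast
    show "subspace {x. x \<in> S \<and> g x = f x}"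
      using S g(1) \<open>f 0 = 0\<close>
      by (auto simp: subspace_def add scale linear_add linear_scale linear_0)
    show "\<And>x. x \<in> B \<Longrightarrow> x \<in> S \<and> g x = f x"
      using B(1) g(2) by auto
  qed
  have image_eq: "f ` S = g ` S"
    using agree by force
  have inj_g: "inj_on g (span B)"
    using inj agree span_B by (simp add: inj_on_def)
  have "span (g ` B) = span (f ` S)"
    using span_linear_image[OF g(1)] span_B image_eq
    by (metis span_span)
  then have "dim (f ` S) = card (g ` B)"
    using linear_independent_injective_image[OF g(1) B(2) inj_g] by (simp add: dim_eq_card)
  also have "\<dots> = card B"
    using inj_g by (simp add: card_image inj_on_subset[OF _ span_superset])
  also have "\<dots> = dim S"
    using span_B B(2) by (metis dim_eq_card span_span)
  finally show ?thesis .
qed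

lemma image_eq_line_iff:
  assumes S: "subspace S" and e: "e \<in> S" and inj: "inj_on f S"
    and scale: "\<And>c x. x \<in> S \<Longrightarrow> f (c *\<^sub>R x) = c *\<^sub>R f x"
  shows "f ` S = range (\<lambda>c. c *\<^sub>R f e) \<longleftrightarrow> S = range (\<lambda>c. c *\<^sub>R e)"
proof -
  have line_subset: "range (\<lambda>c. c *\<^sub>R e) \<subseteq> S"
    using S e by (auto intro: subspace_scale)
  have "range (\<lambda>c. c *\<^sub>R f e) = f ` range (\<lambda>c. c *\<^sub>R e)"
    by (simp add: image_image scale[OF e])
  then show ?thesis
    using inj_on_image_eq_iff[OF inj order_refl line_subset] by simp
qed

lemma ftvn_norm: "ftvn lam \<Longrightarrow> norm (lam x) = norm x"
  by (simp add: ftvn_def)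

lemma ftvn_inner_le: "ftvn lam \<Longrightarrow> inner x y \<le> inner (lam x) (lam y)"
  by (simp add: ftvn_def)

lemma ftvn_inner_self: "ftvn lam \<Longrightarrow> inner (lam x) (lam x) = inner x x"
  by (metis ftvn_norm power2_norm_eq_inner)

lemma ftvn_zero: "ftvn lam \<Longrightarrow> lam 0 = 0"
  by (metis ftvn_norm norm_eq_zero)

lemma inner_center: "c \<in> center lam \<Longrightarrow> inner (lam c) (lam y) = inner c y"
  by (simp add: center_def commute_def)

lemma inner_center': "c \<in> center lam \<Longrightarrow> inner (lam y) (lam c) = inner y c"
  by (metis inner_center inner_commute)

lemma center_add:
  assumes lam: "ftvn lam" and c: "c \<in> center lam" and d: "d \<in> center lam"
  shows "lam (c + d) = lam c + lam d"
proof -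
  have "inner (lam (c + d)) (lam c) = inner (c + d) c"
    and "inner (lam (c + d)) (lam d) = inner (c + d) d"
    and "inner (lam c) (lam d) = inner c d"
    using inner_center'[OF c] inner_center'[OF d] inner_center[OF c] by auto
  then have "inner (lam (c + d) - lam c - lam d) (lam (c + d) - lam c - lam d) = 0"
    using ftvn_inner_self[OF lam, of "c + d"] ftvn_inner_self[OF lam, of c]
      ftvn_inner_self[OF lam, of d]
    by (simp add: inner_diff_left inner_diff_right inner_add_left inner_add_right inner_commute)
  then show ?thesis by (simp add: diff_diff_eq)
qed

lemma center_scaleR:
  assumes lam: "ftvn lam" and c: "c \<in> center lam"
  shows "lam (t *\<^sub>R c) = t *\<^sub>R lam c"
proof -
  have "inner (lam (t *\<^sub>R c)) (lam c) = inner (t *\<^sub>R c) c"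
    using inner_center'[OF c] .
  then have "inner (lam (t *\<^sub>R c) - t *\<^sub>R lam c) (lam (t *\<^sub>R c) - t *\<^sub>R lam c) = 0"
    using ftvn_inner_self[OF lam, of "t *\<^sub>R c"] ftvn_inner_self[OF lam, of c]
    by (simp add: inner_diff_left inner_diff_right inner_commute algebra_simps)
  then show ?thesis by simp
qed

lemma subspace_center:
  assumes lam: "ftvn lam"
  shows "subspace (center lam)"
  unfolding subspace_def
proof (intro conjI ballI allI)
  show "0 \<in> center lam"
    by (simp add: center_def commute_def ftvn_zero[OF lam])
  show "c + d \<in> center lam" if "c \<in> center lam" "d \<in> center lam" for c d
    using that inner_center
    by (simp add: center_add[OF lam that] center_def commute_def inner_add_left)
  show "t *\<^sub>R c \<in> center lam" if "c \<in> center lam" for t c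
    using that inner_center by (simp add: center_scaleR[OF lam that] center_def commute_def)
qed

lemma inj_on_center:
  assumes lam: "ftvn lam"
  shows "inj_on lam (center lam)"
proof (rule inj_onI)
  fix c d assume c: "c \<in> center lam" and "d \<in> center lam" and eq: "lam c = lam d"
  have "norm c = norm d"
    using ftvn_norm[OF lam] eq by metis
  moreover have "inner c d = (norm c)\<^sup>2"
    using inner_center[OF c, of d] eq ftvn_inner_self[OF lam, of c]
    by (simp add: power2_norm_eq_inner)
  ultimately show "c = d"
    by (rule inner_eq_norm_power2_imp_eq)
qed

lemma center_iff_uminus:
  assumes lam: "ftvn lam"
  shows "x \<in> center lam \<longleftrightarrow> lam (- x) = - lam x"
proof
  assume "x \<in> center lam"
  then show "lam (- x) = - lam x"
    using center_scaleR[OF lam, of x "-1"] by simp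
next
  assume odd: "lam (- x) = - lam x"
  have "inner x y = inner (lam x) (lam y)" for y
    using ftvn_inner_le[OF lam, of x y] ftvn_inner_le[OF lam, of "- x" y] odd by simp
  then show "x \<in> center lam"
    by (simp add: center_def commute_def)
qed

lemma center_fixed_if_idempotent:
  assumes mu: "ftvn mu" and idem: "mu (mu w) = mu w" and w: "w \<in> center mu"
  shows "mu w = w"
proof -
  have "inner w (mu w) = (norm (mu w))\<^sup>2"
    using inner_center[OF w, of "mu w"] idem by (simp add: power2_norm_eq_inner)
  then show ?thesis
    using ftvn_norm[OF mu, of w] by (metis inner_eq_norm_power2_imp_eq)
qed

lemma reduced_systemD:
  assumes "reduced_system lam mu"
  shows "ftvn lam" and "ftvn mu" and "mu \<circ> lam = lam" and "range mu \<subseteq> range lam"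
  using assms by (simp_all add: reduced_system_def)

lemma reduced_system_fixes_range:
  "reduced_system lam mu \<Longrightarrow> mu (lam x) = lam x"
  by (metis reduced_systemD(3) comp_apply)

lemma reduced_system_range_eq:
  assumes red: "reduced_system lam mu"
  shows "range mu = range lam"
proof
  show "range mu \<subseteq> range lam"
    by (rule reduced_systemD(4)[OF red])
  show "range lam \<subseteq> range mu"
    using reduced_system_fixes_range[OF red] by (auto intro: range_eqI[of _ mu, OF sym])
qed

lemma reduced_system_idempotent:
  assumes red: "reduced_system lam mu"
  shows "mu \<circ> mu = mu"
proof
  fix y
  obtain x where "mu y = lam x"
    using reduced_system_range_eq[OF red] by blast
  then show "(mu \<circ> mu) y = mu y"
    using reduced_system_fixes_range[OF red] by simp
qed

lemma reduced_system_center_fixed: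
  assumes red: "reduced_system lam mu" and w: "w \<in> center mu"
  shows "mu w = w"
proof (rule center_fixed_if_idempotent[OF reduced_systemD(2)[OF red] _ w])
  show "mu (mu w) = mu w"
    using reduced_system_idempotent[OF red] by (simp add: fun_eq_iff)
qed

lemma reduced_system_center_iff:
  assumes red: "reduced_system lam mu"
  shows "lam x \<in> center mu \<longleftrightarrow> x \<in> center lam"
proof
  note lam = reduced_systemD(1)[OF red] and mu = reduced_systemD(2)[OF red]
  assume "lam x \<in> center mu"
  then have "- lam x \<in> center mu"
    by (rule subspace_neg[OF subspace_center[OF mu]])
  then have "- lam x = mu (- lam x)"
    by (simp add: reduced_system_center_fixed[OF red])
  then have "- lam x \<in> range lam"
    using reduced_system_range_eq[OF red] by (metis rangeI)
  then obtain z where z: "lam z = - lam x" "inner x z = inner (lam x) (lam z)"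
    using lam unfolding ftvn_def by blast
  have norm_z: "norm z = norm (- x)"
    using ftvn_norm[OF lam, of z] ftvn_norm[OF lam, of x] z(1) by simp
  have "inner x z = - (norm x)\<^sup>2"
    using z ftvn_inner_self[OF lam, of x] by (simp add: power2_norm_eq_inner)
  then have "inner z (- x) = (norm z)\<^sup>2"
    using norm_z by (simp add: inner_commute)
  then have "z = - x"
    using norm_z by (rule inner_eq_norm_power2_imp_eq[rotated])
  then show "x \<in> center lam"
    using z(1) center_iff_uminus[OF lam] by simp
next
  note lam = reduced_systemD(1)[OF red] and mu = reduced_systemD(2)[OF red]
  assume "x \<in> center lam"
  then have "mu (- lam x) = - mu (lam x)"
    using center_iff_uminus[OF lam] reduced_system_fixes_range[OF red] by metis
  then show "lam x \<in> center mu"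
    using center_iff_uminus[OF mu] by simp
qed

lemma reduced_system_center_eq_image:
  assumes red: "reduced_system lam mu"
  shows "center mu = lam ` center lam"
proof
  show "lam ` center lam \<subseteq> center mu"
    using reduced_system_center_iff[OF red] by blast
  show "center mu \<subseteq> lam ` center lam"
  proof
    fix w assume w: "w \<in> center mu"
    then obtain x where "w = lam x"
      using reduced_system_center_fixed[OF red] reduced_system_range_eq[OF red] by (metis rangeE rangeI)
    then show "w \<in> lam ` center lam"
      using w reduced_system_center_iff[OF red] by blast
  qed
qed

lemma unit_element_in_center: "unit_element lam e \<Longrightarrow> e \<in> center lam"
  unfolding unit_element_def using range_eqI[of e "\<lambda>c. c *\<^sub>R e" 1] by simp

lemma reduced_system_unit_element_iff:
  assumes red: "reduced_system lam mu"
  shows "unit_element mu (lam e) \<longleftrightarrow> unit_element lam e"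
proof (cases "e \<in> center lam")
  case True
  note lam = reduced_systemD(1)[OF red]
  have "lam e \<noteq> 0 \<longleftrightarrow> e \<noteq> 0"
    using ftvn_norm[OF lam, of e] by (metis norm_eq_zero)
  moreover have "lam ` center lam = range (\<lambda>c. c *\<^sub>R lam e) \<longleftrightarrow>
      center lam = range (\<lambda>c. c *\<^sub>R e)"
    using center_scaleR[OF lam]
    by (rule image_eq_line_iff[OF subspace_center[OF lam] True inj_on_center[OF lam]])
  ultimately show ?thesis
    unfolding unit_element_def reduced_system_center_eq_image[OF red] by blast
next
  case False
  then have "lam e \<notin> center mu"
    by (simp add: reduced_system_center_iff[OF red])
  with False show ?thesis
    using unit_element_in_center by metis
qed

theorem proposition10p2:
  fixes lam :: "'v::real_inner \<Rightarrow> 'w::real_inner" and mu :: "'w \<Rightarrow> 'w"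
  assumes "reduced_system lam mu"
  shows "(range mu = range lam \<and> mu \<circ> mu = mu)
    \<and> (lam ` center lam = mu ` center mu \<and> mu ` center mu = center mu)
    \<and> (dim (center lam) = dim (lam ` center lam) \<and>
         dim (lam ` center lam) = dim (mu ` center mu) \<and>
         dim (mu ` center mu) = dim (center mu))
    \<and> (\<forall>e. unit_element lam e \<longleftrightarrow> unit_element mu (lam e))"
proof -
  note lam = reduced_systemD(1)[OF assms]
  have fixed: "mu ` center mu = center mu"
    using reduced_system_center_fixed[OF assms] by force
  have image: "lam ` center lam = center mu"
    using reduced_system_center_eq_image[OF assms] by simp
  have "dim (lam ` center lam) = dim (center lam)"
    by (rule dim_image_eq_on_subspace[OF subspace_center[OF lam] center_add[OF lam]
          center_scaleR[OF lam] inj_on_center[OF lam]])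
  then show ?thesis
    using reduced_system_range_eq[OF assms] reduced_system_idempotent[OF assms]
      reduced_system_unit_element_iff[OF assms] fixed image
    by simp
qed

end
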